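(* For every condition $\varphi$ (over a signature of facts $\Sigma$ and a $\Sigma$-algebra of facts $\mathcal{D}$), the rewriting system $\mathcal{R}^{\mathrm{cond}}_{\Sigma,\mathcal{D}}(\varphi)$ is terminating, i.e. there is no infinite sequence of one-step rewrites $t_0\to t_1\to t_2\to\cdots$ in it.
   Context: Setting. Fix an order-sorted signature $\Sigma$ containing sorts $\mathsf{Fact}$ (facts) and $\mathsf{Bool}$, and a $\Sigma$-algebra of facts $\mathcal{D}$ presented by structural axioms $A$ (associativity/commutativity/identity) together with confluent and terminating equations; $\mathcal{D}$ provides the Boolean connectives and a Boolean-valued equality $=$ on every sort, and every ground term of sort $\mathsf{Bool}$ reduces to $\mathsf{true}$ or $\mathsf{false}$. Term equality below is modulo $A$ and these equations. Finite multisets of facts are built with an associative and commutative operator $\circ$ with identity $\emptyset$. Patterns. A terminating and preserving pattern $P$ is a term $[F_1]_!\circ[F_2]_?$ or $[F_2]_?$, where $F_1,F_2$ are non-empty (in general non-ground) multisets of facts; $P_!$ and $P_?$ denote the multisets of facts wrapped by $[\cdot]_!$ and $[\cdot]_?$ respectively ($P_!=\emptyset$ if absent). Conditions are the terms $\mathrm{False}$; $\{B\}$ for a term $B$ of sort $\mathsf{Bool}$; $\neg\psi$; $\psi_1\vee\psi_2$; $\exists P.\psi$ with $P$ a terminating and preserving pattern. In $\exists P.\psi$ the quantifier binds in $\psi$ all variables of $P$ not already bound by the surrounding context. A subcondition of $\varphi$ is a subterm of $\varphi$ which is a condition. The rewriting system $\mathcal{R}^{\mathrm{cond}}_{\Sigma,\mathcal{D}}(\varphi)$.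 States are terms $\{F,S\}^c$, where $F$ is a ground finite multiset of facts and $S$ is a finite sequence (stack, top at the right) of frames, and terminal terms $\mathrm{Sat}(B)$, $B$ Boolean. Frames: $\mathrm{Res}(B)$; $\mathrm{Not}$; and, for a subcondition $\psi$ of $\varphi$, a list $\vec v$ of distinct variables of $\varphi$ containing the free variables of $\psi$, and a list $\vec a$ of ground values of the same sorts: evaluation frames $[\vec a]^{\vec v}_\psi$, marked frames $[\vec a]^{\vec v,\downarrow}_\psi$, and, when $\psi=\exists P.\psi'$, iterator frames $[F'\mid\vec a]^{\vec v}_{\psi}$ with $F'$ a multiset of facts. Write $\sigma=\{\vec a/\vec v\}$. The rules ($S$ an arbitrary stack) are: (1) $\{F,S[\vec a]^{\vec v}_{\mathrm{False}}\}^c\to\{F,S\,\mathrm{Res}(\mathsf{false})\}^c$; (2) $\{F,S[\vec a]^{\vec v}_{\{B\}}\}^c\to\{F,S\,\mathrm{Res}(\sigma(B))\}^c$; (3) $\{F,S[\vec a]^{\vec v}_{\neg\psi}\}^c\to\{F,S\,\mathrm{Not}\,[\vec a]^{\vec v}_{\psi}\}^c$; (4) $\{F,S\,\mathrm{Not}\,\mathrm{Res}(B)\}^c\to\{F,S\,\mathrm{Res}(\neg B)\}^c$; (5) $\{F,S[\vec a]^{\vec v}_{\psi_1\vee\psi_2}\}^c\to\{F,S[\vec a]^{\vec v,\downarrow}_{\psi_1}[\vec a]^{\vec v}_{\psi_2}\}^c$; (6) $\{F,S[\vec a]^{\vec v,\downarrow}_{\psi}\mathrm{Res}(\mathsf{true})\}^c\to\{F,S\,\mathrm{Res}(\mathsf{true})\}^c$;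 (7) $\{F,S[\vec a]^{\vec v,\downarrow}_{\psi}\mathrm{Res}(\mathsf{false})\}^c\to\{F,S[\vec a]^{\vec v}_{\psi}\}^c$; (8) $\{F,S[\vec a]^{\vec v}_{\exists P.\psi}\}^c\to\{F,S[F\mid\vec a]^{\vec v}_{\exists P.\psi}\}^c$; (9) if $\vec w$ lists the variables of $P$ not in $\vec v$, $\vec b$ are ground values, $\sigma'=\{\vec a/\vec v,\vec b/\vec w\}$ and $F'=F''\circ\sigma'(P_!\circ P_?)$, then $\{F,S[F'\mid\vec a]^{\vec v}_{\exists P.\psi}\}^c\to\{F,S[F''\circ\sigma'(P_!)\mid\vec a]^{\vec v}_{\exists P.\psi}[\vec a,\vec b]^{\vec v,\vec w}_{\psi}\}^c$; (10) $\{F,S[F'\mid\vec a]^{\vec v}_{\exists P.\psi}\mathrm{Res}(\mathsf{false})\}^c\to\{F,S[F'\mid\vec a]^{\vec v}_{\exists P.\psi}\}^c$; (11) $\{F,S[F'\mid\vec a]^{\vec v}_{\exists P.\psi}\mathrm{Res}(\mathsf{true})\}^c\to\{F,S\,\mathrm{Res}(\mathsf{true})\}^c$; (12) if there are no $F'',\vec b$ with $F'=F''\circ\{\vec a/\vec v,\vec b/\vec w\}(P_!\circ P_?)$, then $\{F,S[F'\mid\vec a]^{\vec v}_{\exists P.\psi}\}^c\to\{F,S\,\mathrm{Res}(\mathsf{false})\}^c$; (13) $\{F,\mathrm{Res}(B)\}^c\to\mathrm{Sat}(B)$. *)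

theory Defs
  imports Main "HOL-Library.Multiset"
begin

text \<open>
Abstract rendering of the setting.
  'fact : ground facts, i.e. elements of the algebra of facts D (equality = equality modulo A and
          the equations; so multiset equality on 'fact multiset is multiset equality modulo A, E).
  'pf   : (possibly non-ground) fact terms occurring in patterns.
  'b    : terms of sort Bool occurring in conditions.
  'v    : variables;  'val : ground values;  's : sorts.
  inst sigma t   : the ground fact sigma(t) (normal form modulo A and the equations).
  beval sigma B  : the truth value to which the ground Bool term sigma(B) reduces.
  pfvars / bvars : variables of a fact term / Bool term.
  vsort x        : sort of variable x;  hassort a s : value a has sort s (order-sorted).
\<close>

text \<open>A pattern: optional preserved part [F1]_! (None if absent) and the consumed part [F2]_?.\<close>
type_synonym 'pf pattern = "'pf multiset option \<times> 'pf multiset"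

definition pat_bang :: "'pf pattern \<Rightarrow> 'pf multiset" where
  "pat_bang P = (case fst P of None \<Rightarrow> {#} | Some F1 \<Rightarrow> F1)"

definition pat_quest :: "'pf pattern \<Rightarrow> 'pf multiset" where
  "pat_quest P = snd P"

definition tp_pattern :: "'pf pattern \<Rightarrow> bool" where
  "tp_pattern P \<longleftrightarrow> snd P \<noteq> {#} \<and> fst P \<noteq> Some {#}"

definition pat_vars :: "('pf \<Rightarrow> 'v set) \<Rightarrow> 'pf pattern \<Rightarrow> 'v set" where
  "pat_vars pfvars P = (\<Union>t\<in>set_mset (pat_bang P + pat_quest P). pfvars t)"

datatype ('pf, 'b) cond =
    CFalse
  | CBool 'b
  | CNot "('pf, 'b) cond"
  | COr "('pf, 'b) cond" "('pf, 'b) cond"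
  | CEx "'pf pattern" "('pf, 'b) cond"

fun tp_cond :: "('pf, 'b) cond \<Rightarrow> bool" where
  "tp_cond CFalse = True"
| "tp_cond (CBool B) = True"
| "tp_cond (CNot \<psi>) = tp_cond \<psi>"
| "tp_cond (COr \<psi>1 \<psi>2) = (tp_cond \<psi>1 \<and> tp_cond \<psi>2)"
| "tp_cond (CEx P \<psi>) = (tp_pattern P \<and> tp_cond \<psi>)"

fun subconds :: "('pf, 'b) cond \<Rightarrow> ('pf, 'b) cond set" where
  "subconds CFalse = {CFalse}"
| "subconds (CBool B) = {CBool B}"
| "subconds (CNot \<psi>) = insert (CNot \<psi>) (subconds \<psi>)"
| "subconds (COr \<psi>1 \<psi>2) = insert (COr \<psi>1 \<psi>2) (subconds \<psi>1 \<union> subconds \<psi>2)"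
| "subconds (CEx P \<psi>) = insert (CEx P \<psi>) (subconds \<psi>)"

fun cvars :: "('pf \<Rightarrow> 'v set) \<Rightarrow> ('b \<Rightarrow> 'v set) \<Rightarrow> ('pf, 'b) cond \<Rightarrow> 'v set" where
  "cvars pv bv CFalse = {}"
| "cvars pv bv (CBool B) = bv B"
| "cvars pv bv (CNot \<psi>) = cvars pv bv \<psi>"
| "cvars pv bv (COr \<psi>1 \<psi>2) = cvars pv bv \<psi>1 \<union> cvars pv bv \<psi>2"
| "cvars pv bv (CEx P \<psi>) = pat_vars pv P \<union> cvars pv bv \<psi>"

fun cfv :: "('pf \<Rightarrow> 'v set) \<Rightarrow> ('b \<Rightarrow> 'v set) \<Rightarrow> ('pf, 'b) cond \<Rightarrow> 'v set" where
  "cfv pv bv CFalse = {}"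
| "cfv pv bv (CBool B) = bv B"
| "cfv pv bv (CNot \<psi>) = cfv pv bv \<psi>"
| "cfv pv bv (COr \<psi>1 \<psi>2) = cfv pv bv \<psi>1 \<union> cfv pv bv \<psi>2"
| "cfv pv bv (CEx P \<psi>) = cfv pv bv \<psi> - pat_vars pv P"

text \<open>Frames; lists of variables / values represent the substitution {a/v}.\<close>
datatype ('fact, 'v, 'val, 'pf, 'b) frame =
    Res bool
  | NotF
  | Eval "'val list" "'v list" "('pf, 'b) cond"
  | Marked "'val list" "'v list" "('pf, 'b) cond"
  | Iter "'fact multiset" "'val list" "'v list" "('pf, 'b) cond"

text \<open>States {F,S}^c (stack S, top = last element of the list) and terminal terms Sat(B).\<close>
datatype ('fact, 'v, 'val, 'pf, 'b) cstate =
    St "'fact multiset" "('fact, 'v, 'val, 'pf, 'b) frame list"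
  | Sat bool

definition subst_of :: "'v list \<Rightarrow> 'val list \<Rightarrow> 'v \<Rightarrow> 'val option" where
  "subst_of vs as = map_of (zip vs as)"

definition wf_binding ::
  "('pf \<Rightarrow> 'v set) \<Rightarrow> ('b \<Rightarrow> 'v set) \<Rightarrow> ('v \<Rightarrow> 's) \<Rightarrow> ('val \<Rightarrow> 's \<Rightarrow> bool)
   \<Rightarrow> ('pf, 'b) cond \<Rightarrow> 'val list \<Rightarrow> 'v list \<Rightarrow> ('pf, 'b) cond \<Rightarrow> bool" where
  "wf_binding pv bv vsort hassort \<phi> as vs \<psi> \<longleftrightarrow>
     \<psi> \<in> subconds \<phi> \<and> distinct vs \<and> set vs \<subseteq> cvars pv bv \<phi> \<and> cfv pv bv \<psi> \<subseteq> set vs \<and>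
     list_all2 (\<lambda>a v. hassort a (vsort v)) as vs"

fun wf_frame ::
  "('pf \<Rightarrow> 'v set) \<Rightarrow> ('b \<Rightarrow> 'v set) \<Rightarrow> ('v \<Rightarrow> 's) \<Rightarrow> ('val \<Rightarrow> 's \<Rightarrow> bool)
   \<Rightarrow> ('pf, 'b) cond \<Rightarrow> ('fact, 'v, 'val, 'pf, 'b) frame \<Rightarrow> bool" where
  "wf_frame pv bv vsort hassort \<phi> (Res B) = True"
| "wf_frame pv bv vsort hassort \<phi> NotF = True"
| "wf_frame pv bv vsort hassort \<phi> (Eval as vs \<psi>) = wf_binding pv bv vsort hassort \<phi> as vs \<psi>"
| "wf_frame pv bv vsort hassort \<phi> (Marked as vs \<psi>) = wf_binding pv bv vsort hassort \<phi> as vs \<psi>"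
| "wf_frame pv bv vsort hassort \<phi> (Iter F' as vs \<psi>) =
     (wf_binding pv bv vsort hassort \<phi> as vs \<psi> \<and> (\<exists>P \<psi>'. \<psi> = CEx P \<psi>'))"

fun wf_cstate ::
  "('pf \<Rightarrow> 'v set) \<Rightarrow> ('b \<Rightarrow> 'v set) \<Rightarrow> ('v \<Rightarrow> 's) \<Rightarrow> ('val \<Rightarrow> 's \<Rightarrow> bool)
   \<Rightarrow> ('pf, 'b) cond \<Rightarrow> ('fact, 'v, 'val, 'pf, 'b) cstate \<Rightarrow> bool" where
  "wf_cstate pv bv vsort hassort \<phi> (St F S) = (\<forall>fr\<in>set S. wf_frame pv bv vsort hassort \<phi> fr)"
| "wf_cstate pv bv vsort hassort \<phi> (Sat B) = True"

inductive cstep ::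
  "(('v \<Rightarrow> 'val option) \<Rightarrow> 'pf \<Rightarrow> 'fact) \<Rightarrow> ('pf \<Rightarrow> 'v set)
   \<Rightarrow> (('v \<Rightarrow> 'val option) \<Rightarrow> 'b \<Rightarrow> bool) \<Rightarrow> ('v \<Rightarrow> 's) \<Rightarrow> ('val \<Rightarrow> 's \<Rightarrow> bool)
   \<Rightarrow> ('fact, 'v, 'val, 'pf, 'b) cstate \<Rightarrow> ('fact, 'v, 'val, 'pf, 'b) cstate \<Rightarrow> bool"
  for inst pv beval vsort hassort where
  r1: "cstep inst pv beval vsort hassort (St F (S @ [Eval as vs CFalse])) (St F (S @ [Res False]))"
| r2: "cstep inst pv beval vsort hassort (St F (S @ [Eval as vs (CBool B)]))
         (St F (S @ [Res (beval (subst_of vs as) B)]))"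
| r3: "cstep inst pv beval vsort hassort (St F (S @ [Eval as vs (CNot \<psi>)]))
         (St F (S @ [NotF, Eval as vs \<psi>]))"
| r4: "cstep inst pv beval vsort hassort (St F (S @ [NotF, Res B])) (St F (S @ [Res (\<not> B)]))"
| r5: "cstep inst pv beval vsort hassort (St F (S @ [Eval as vs (COr \<psi>1 \<psi>2)]))
         (St F (S @ [Marked as vs \<psi>1, Eval as vs \<psi>2]))"
| r6: "cstep inst pv beval vsort hassort (St F (S @ [Marked as vs \<psi>, Res True])) (St F (S @ [Res True]))"
| r7: "cstep inst pv beval vsort hassort (St F (S @ [Marked as vs \<psi>, Res False]))
         (St F (S @ [Eval as vs \<psi>]))"
| r8: "cstep inst pv beval vsort hassort (St F (S @ [Eval as vs (CEx P \<psi>)]))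
         (St F (S @ [Iter F as vs (CEx P \<psi>)]))"
| r9: "\<lbrakk> distinct ws; set ws = pat_vars pv P - set vs;
         list_all2 (\<lambda>b w. hassort b (vsort w)) bs ws;
         F' = F'' + image_mset (inst (subst_of (vs @ ws) (as @ bs))) (pat_bang P + pat_quest P) \<rbrakk>
       \<Longrightarrow> cstep inst pv beval vsort hassort (St F (S @ [Iter F' as vs (CEx P \<psi>)]))
         (St F (S @ [Iter (F'' + image_mset (inst (subst_of (vs @ ws) (as @ bs))) (pat_bang P)) as vs (CEx P \<psi>),
                     Eval (as @ bs) (vs @ ws) \<psi>]))"
| r10: "cstep inst pv beval vsort hassort (St F (S @ [Iter F' as vs (CEx P \<psi>), Res False]))
         (St F (S @ [Iter F' as vs (CEx P \<psi>)]))"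
| r11: "cstep inst pv beval vsort hassort (St F (S @ [Iter F' as vs (CEx P \<psi>), Res True]))
         (St F (S @ [Res True]))"
| r12: "\<lbrakk> distinct ws; set ws = pat_vars pv P - set vs;
          \<not> (\<exists>F'' bs. list_all2 (\<lambda>b w. hassort b (vsort w)) bs ws \<and>
               F' = F'' + image_mset (inst (subst_of (vs @ ws) (as @ bs))) (pat_bang P + pat_quest P)) \<rbrakk>
       \<Longrightarrow> cstep inst pv beval vsort hassort (St F (S @ [Iter F' as vs (CEx P \<psi>)]))
         (St F (S @ [Res False]))"
| r13: "cstep inst pv beval vsort hassort (St F [Res B]) (Sat B)"

definition Rcond ::
  "(('v \<Rightarrow> 'val option) \<Rightarrow> 'pf \<Rightarrow> 'fact) \<Rightarrow> ('pf \<Rightarrow> 'v set)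
   \<Rightarrow> (('v \<Rightarrow> 'val option) \<Rightarrow> 'b \<Rightarrow> bool) \<Rightarrow> ('b \<Rightarrow> 'v set) \<Rightarrow> ('v \<Rightarrow> 's) \<Rightarrow> ('val \<Rightarrow> 's \<Rightarrow> bool)
   \<Rightarrow> ('pf, 'b) cond
   \<Rightarrow> ('fact, 'v, 'val, 'pf, 'b) cstate \<Rightarrow> ('fact, 'v, 'val, 'pf, 'b) cstate \<Rightarrow> bool" where
  "Rcond inst pv beval bv vsort hassort \<phi> s t \<longleftrightarrow>
     wf_cstate pv bv vsort hassort \<phi> s \<and> wf_cstate pv bv vsort hassort \<phi> t \<and>
     cstep inst pv beval vsort hassort s t"

end

theory Submission
  imports Defs
begin

text \<open>
The fact multiset \<open>F\<close> of a state is never changed by a step, so \<open>N = size F\<close> bounds how often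
rule (9) can fire on an iterator frame: each firing removes the non-empty instance of \<open>P\<^sub>?\<close> from
the iterator multiset. Weighing an iterator frame by \<open>size F' \<cdot> (w \<psi> + 2)\<close> and an evaluation frame
of \<open>\<exists>P. \<psi>\<close> by \<open>N \<cdot> (w \<psi> + 2) + 3\<close>, where \<open>w = cond_weight N\<close>, makes the total weight of the stack drop with every rule,
which rules out infinite rewrite sequences.
\<close>

fun cond_weight :: "nat \<Rightarrow> ('pf, 'b) cond \<Rightarrow> nat" where
  "cond_weight N CFalse = 2"
| "cond_weight N (CBool B) = 2"
| "cond_weight N (CNot \<psi>) = cond_weight N \<psi> + 2"
| "cond_weight N (COr \<psi>1 \<psi>2) = cond_weight N \<psi>1 + cond_weight N \<psi>2 + 1"
| "cond_weight N (CEx P \<psi>) = N * (cond_weight N \<psi> + 2) + 3"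

fun frame_weight :: "nat \<Rightarrow> ('fact, 'v, 'val, 'pf, 'b) frame \<Rightarrow> nat" where
  "frame_weight N (Res B) = 1"
| "frame_weight N NotF = 1"
| "frame_weight N (Eval as vs \<psi>) = cond_weight N \<psi>"
| "frame_weight N (Marked as vs \<psi>) = cond_weight N \<psi>"
| "frame_weight N (Iter F' as vs (CEx P \<psi>)) = size F' * (cond_weight N \<psi> + 2) + 2"
| "frame_weight N (Iter F' as vs _) = 2"

fun state_weight :: "('fact, 'v, 'val, 'pf, 'b) cstate \<Rightarrow> nat" where
  "state_weight (St F S) = (\<Sum>fr\<leftarrow>S. frame_weight (size F) fr)"
| "state_weight (Sat B) = 0"

lemma cond_weight_ge_2: "cond_weight N \<psi> \<ge> 2"
  by (induction \<psi>) auto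

lemma tp_pattern_if_subcond:
  "tp_cond \<phi> \<Longrightarrow> CEx P \<psi> \<in> subconds \<phi> \<Longrightarrow> tp_pattern P"
  by (induction \<phi>) auto

lemma size_pat_quest_pos: "tp_pattern P \<Longrightarrow> size (pat_quest P) > 0"
  by (simp add: tp_pattern_def pat_quest_def nonempty_has_size)

lemma cstep_decreases_state_weight:
  assumes "cstep inst pv beval vsort hassort s t"
    and "wf_cstate pv bv vsort hassort \<phi> s" and "tp_cond \<phi>"
  shows "state_weight t < state_weight s"
  using assms
proof (induction rule: cstep.induct)
  case (r9 ws P vs bs F' F'' as F S \<psi>)
  let ?w = "cond_weight (size F) \<psi> + 2"
  let ?\<sigma> = "inst (subst_of (vs @ ws) (as @ bs))"
  have "CEx P \<psi> \<in> subconds \<phi>"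
    using r9 by (simp add: wf_binding_def)
  then have "tp_pattern P"
    using tp_pattern_if_subcond \<open>tp_cond \<phi>\<close> by blast
  then have "?w \<le> size (pat_quest P) * ?w"
    using size_pat_quest_pos[of P] by (metis Suc_leI One_nat_def mult_1 mult_le_mono1)
  moreover have "size F' = size (F'' + image_mset ?\<sigma> (pat_bang P)) + size (pat_quest P)"
    using r9(4) by simp
  ultimately show ?case
    by (simp add: algebra_simps)
qed (auto simp: Suc_le_eq intro: less_le_trans[OF _ cond_weight_ge_2])

lemma wf_Rcond:
  assumes "tp_cond \<phi>"
  shows "wf {(t, s). Rcond inst pv beval bv vsort hassort \<phi> s t}"
proof (rule wf_subset)
  show "{(t, s). Rcond inst pv beval bv vsort hassort \<phi> s t} \<subseteq> measure state_weight"
    using cstep_decreases_state_weight assms by (auto simp: Rcond_def)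
qed simp

theorem theorem1:
  fixes inst :: "('v \<Rightarrow> 'val option) \<Rightarrow> 'pf \<Rightarrow> 'fact"
    and pfvars :: "'pf \<Rightarrow> 'v set"
    and beval :: "('v \<Rightarrow> 'val option) \<Rightarrow> 'b \<Rightarrow> bool"
    and bvars :: "'b \<Rightarrow> 'v set"
    and vsort :: "'v \<Rightarrow> 's"
    and hassort :: "'val \<Rightarrow> 's \<Rightarrow> bool"
    and \<phi> :: "('pf, 'b) cond"
  assumes "\<And>t. finite (pfvars t)"
    and "\<And>B. finite (bvars B)"
    and "tp_cond \<phi>"
  shows "\<not> (\<exists>f. \<forall>i. Rcond inst pfvars beval bvars vsort hassort \<phi> (f i) (f (Suc i)))"
  using wf_Rcond[OF \<open>tp_cond \<phi>\<close>, of inst pfvars beval bvars vsort hassort]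
  by (simp add: wf_iff_no_infinite_down_chain)

end
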